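(* Assume the standing conventions of the context and suppose $\mathcal D_{Z,Z'}\neq\emptyset$. Let $\Lambda\in\overline{\mathcal S}_Z$ and $\Lambda'\in\overline{\mathcal S}_{Z'}$. (i) If $\Psi'$ is a consecutive pair in $Z'_{\mathrm I}$ with $(Z,\Lambda_{\Psi'})\in\mathcal D_{Z,Z'}$, then $(\Lambda,\Lambda')\in\overline{\mathcal B}^+_{Z,Z'}$ if and only if $(\Lambda,\Lambda'+\Lambda_{\Psi'})\in\overline{\mathcal B}^+_{Z,Z'}$. (ii) If $\Psi$ is a consecutive pair in $Z_{\mathrm I}$ with $(\Lambda_\Psi,Z')\in\mathcal D_{Z,Z'}$, then $(\Lambda,\Lambda')\in\overline{\mathcal B}^+_{Z,Z'}$ if and only if $(\Lambda+\Lambda_{\Psi},\Lambda')\in\overline{\mathcal B}^+_{Z,Z'}$.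
   Context: A symbol is an array $\Lambda=\binom{a'_1,\ldots,a'_{m_1}}{b'_1,\ldots,b'_{m_2}}$ of two strictly decreasing finite sequences of nonnegative integers (top row, bottom row); its defect is $\mathrm{def}(\Lambda)=m_1-m_2$. Standing assumptions: $Z=\binom{a_1,\ldots,a_{m+1}}{b_1,\ldots,b_m}$ is a special symbol of defect $1$, i.e. $a_1\ge b_1\ge a_2\ge b_2\ge\cdots\ge b_m\ge a_{m+1}$; $Z'=\binom{c_1,\ldots,c_{m'}}{d_1,\ldots,d_{m'}}$ is a special symbol of defect $0$, i.e. $c_1\ge d_1\ge c_2\ge d_2\ge\cdots\ge c_{m'}\ge d_{m'}$; and $m'\in\{m,m+1\}$. For a symbol $Y$, $Y_{\mathrm I}$ is the set of entries of $Y$ occurring in exactly one row. For $M\subset Z_{\mathrm I}$, $\Lambda_M$ is the symbol obtained from $Z$ by moving every entry of $M$ to the other row (rows re-sorted decreasingly); for $N\subset Z'_{\mathrm I}$, $\Lambda_N$ is obtained from $Z'$ in the same way. $\overline{\mathcal S}_Z=\{\Lambda_M: M\subset Z_{\mathrm I}\}$, $\overline{\mathcal S}_{Z'}=\{\Lambda_N:N\subset Z'_{\mathrm I}\}$; $\mathcal S_{Z,1}$ (resp. $\mathcal S_{Z',0}$) is the set of elements of $\overline{\mathcal S}_Z$ of defect $1$ (resp. of $\overline{\mathcal S}_{Z'}$ of defect $0$). Sum: $\Lambda_{M_1}+\Lambda_{M_2}:=\Lambda_{(M_1\cup M_2)\smallsetminus(M_1\cap M_2)}$ (for subsets of $Z_{\mathrm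 I}$, and likewise of $Z'_{\mathrm I}$). A consecutive pair in $Z'_{\mathrm I}$ is a two-element subset $\{c_k,d_l\}\subset Z'_{\mathrm I}$, written $\binom{c_k}{d_l}$, with $l\in\{k-1,k\}$; a consecutive pair in $Z_{\mathrm I}$ is $\{a_k,b_l\}\subset Z_{\mathrm I}$, written $\binom{a_k}{b_l}$, with $l\in\{k-1,k\}$. Relation $\overline{\mathcal B}^+_{Z,Z'}\subset\overline{\mathcal S}_Z\times\overline{\mathcal S}_{Z'}$: for $\Lambda=\binom{a'_1,\ldots,a'_{m_1}}{b'_1,\ldots,b'_{m_2}}\in\overline{\mathcal S}_Z$ and $\Lambda'=\binom{c'_1,\ldots,c'_{m'_1}}{d'_1,\ldots,d'_{m'_2}}\in\overline{\mathcal S}_{Z'}$, $(\Lambda,\Lambda')\in\overline{\mathcal B}^+_{Z,Z'}$ iff $\mathrm{def}(\Lambda')=1-\mathrm{def}(\Lambda)$ and: if $m'=m$, $a'_i>d'_i\ge a'_{i+1}$ for $1\le i\le m'_2$ and $b'_{i-1}>c'_i\ge b'_i$ for $1\le i\le m'_1$; if $m'=m+1$, $a'_i\ge d'_i>a'_{i+1}$ for $1\le i\le m'_2$ and $b'_{i-1}\ge c'_i>b'_i$ for $1\le i\le m'_1$; here $b'_0=+\infty$ and nonexistent entries $a'_j,b'_j$ beyond the row lengths are $-\infty$. Then $\mathcal D_{Z,Z'}=\overline{\mathcal B}^+_{Z,Z'}\cap(\mathcal S_{Z,1}\times\mathcal S_{Z',0})$. *)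

theory Defs
  imports Main "HOL-Library.Extended_Real"
begin

text \<open>A symbol is a pair (top row, bottom row) of strictly decreasing lists of
naturals. Indices are 0-based (entry a'_{i+1} of the paper is top ! i).\<close>

type_synonym symbol = "nat list \<times> nat list"

definition strict_decr :: "nat list \<Rightarrow> bool" where
  "strict_decr xs \<longleftrightarrow> sorted_wrt (>) xs"

definition is_symbol :: "symbol \<Rightarrow> bool" where
  "is_symbol L \<longleftrightarrow> strict_decr (fst L) \<and> strict_decr (snd L)"

definition defect :: "symbol \<Rightarrow> int" where
  "defect L = int (length (fst L)) - int (length (snd L))"

definition sym_I :: "symbol \<Rightarrow> nat set" where
  "sym_I Y = (set (fst Y) - set (snd Y)) \<union> (set (snd Y) - set (fst Y))"

definition decr_list :: "nat set \<Rightarrow> nat list" where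
  "decr_list S = rev (sorted_list_of_set S)"

definition lam :: "symbol \<Rightarrow> nat set \<Rightarrow> symbol" where
  "lam Y M = (decr_list ((set (fst Y) - M) \<union> (set (snd Y) \<inter> M)),
              decr_list ((set (snd Y) - M) \<union> (set (fst Y) \<inter> M)))"

definition Sbar :: "symbol \<Rightarrow> symbol set" where
  "Sbar Y = {lam Y M | M. M \<subseteq> sym_I Y}"

definition S_def_set :: "symbol \<Rightarrow> int \<Rightarrow> symbol set" where
  "S_def_set Y d = {L \<in> Sbar Y. defect L = d}"

definition special_def1 :: "symbol \<Rightarrow> bool" where
  "special_def1 Z \<longleftrightarrow> is_symbol Z \<and> length (fst Z) = length (snd Z) + 1 \<and>
     (\<forall>i < length (snd Z). fst Z ! i \<ge> snd Z ! i \<and> snd Z ! i \<ge> fst Z ! (i+1))"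

definition special_def0 :: "symbol \<Rightarrow> bool" where
  "special_def0 Z \<longleftrightarrow> is_symbol Z \<and> length (fst Z) = length (snd Z) \<and>
     (\<forall>i < length (snd Z). fst Z ! i \<ge> snd Z ! i \<and>
        (i + 1 < length (fst Z) \<longrightarrow> snd Z ! i \<ge> fst Z ! (i+1)))"

definition ent :: "nat list \<Rightarrow> nat \<Rightarrow> ereal" where
  "ent xs i = (if i < length xs then ereal (real (xs ! i)) else -\<infinity>)"

text \<open>b'_{i-1} in 0-based form: previous entry, +infinity for the first one.\<close>
definition ent_prev :: "nat list \<Rightarrow> nat \<Rightarrow> ereal" where
  "ent_prev xs i = (if i = 0 then \<infinity> else ent xs (i - 1))"

text \<open>The relation B^+_{Z,Z'} (bar). Here m = length of bottom row of Z,
  m' = length of top row of Z'.\<close>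
definition Bplus :: "symbol \<Rightarrow> symbol \<Rightarrow> symbol \<Rightarrow> symbol \<Rightarrow> bool" where
  "Bplus Z Z' L L' \<longleftrightarrow>
     L \<in> Sbar Z \<and> L' \<in> Sbar Z' \<and> defect L' = 1 - defect L \<and>
     (let a = fst L; b = snd L; c = fst L'; d = snd L' in
      (if length (fst Z') = length (snd Z) then
         (\<forall>i < length d. ent a i > ent d i \<and> ent d i \<ge> ent a (i+1)) \<and>
         (\<forall>i < length c. ent_prev b i > ent c i \<and> ent c i \<ge> ent b i)
       else
         (\<forall>i < length d. ent a i \<ge> ent d i \<and> ent d i > ent a (i+1)) \<and>
         (\<forall>i < length c. ent_prev b i \<ge> ent c i \<and> ent c i > ent b i)))"

definition Dset :: "symbol \<Rightarrow> symbol \<Rightarrow> (symbol \<times> symbol) set" where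
  "Dset Z Z' = {(L, L'). Bplus Z Z' L L' \<and> L \<in> S_def_set Z 1 \<and> L' \<in> S_def_set Z' 0}"

text \<open>Consecutive pair {c_k, d_l} in Y_I with l in {k-1, k} (0-based: l = k or l + 1 = k).
  Applies to both Z (top a, bottom b) and Z' (top c, bottom d).\<close>
definition consec_pair :: "symbol \<Rightarrow> nat set \<Rightarrow> bool" where
  "consec_pair Y P \<longleftrightarrow> (\<exists>k l. k < length (fst Y) \<and> l < length (snd Y) \<and>
      (l = k \<or> l + 1 = k) \<and> P = {fst Y ! k, snd Y ! l} \<and> P \<subseteq> sym_I Y \<and> card P = 2)"

end

theory Submission
  imports Defs "HOL-Combinatorics.Transposition"
begin

text \<open>Let \<open>R\<close> be \<open><\<close> if \<open>m' = m\<close> and \<open>\<le>\<close> if \<open>m' = m + 1\<close>; membership in \<open>B\<^sup>+\<close> is a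
  statement about how many entries of each row of \<open>\<Lambda>\<close> are \<open>R\<close>-above each entry of \<open>\<Lambda>'\<close>.

  The two entries \<open>x > y\<close> of a consecutive pair are adjacent in value among all entries of their
  symbol. While they lie in different rows, toggling them acts as the transposition \<open>(x y)\<close>,
  which preserves every other comparison. Hence (i) reduces to \<open>R x v \<longleftrightarrow> R y v\<close> for the entries
  \<open>v\<close> of \<open>Z\<close>, and (ii) to \<open>R z x \<longleftrightarrow> R z y\<close> for the entries \<open>z\<close> of \<open>Z'\<close>; in both cases this
  indistinguishability also forces \<open>x\<close> and \<open>y\<close> into different rows, as counts of adjacent entries
  of one row differ. For (i) it follows from \<open>(Z, \<Lambda>\<^bsub>\<Psi>'\<^esub>) \<in> \<D>\<close> by comparing the counts at \<open>x\<close>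
  and \<open>y\<close> with the interlacing of the rows of \<open>Z\<close> and of \<open>Z'\<close>. For (ii), since the rows of \<open>Z'\<close>
  interlace, any \<open>\<Lambda>\<close> related to \<open>Z'\<close> has interlacing counts above each entry \<open>z\<close> of \<open>Z'\<close>: the
  numbers of top and of bottom entries of \<open>\<Lambda>\<close> that are \<open>R\<close>-above \<open>z\<close> differ by \<open>0\<close> or \<open>1\<close>. For
  \<open>\<Lambda> = \<Lambda>\<^sub>\<Psi>\<close> and \<open>z\<close> separating \<open>x\<close> from \<open>y\<close>, that difference would be \<open>-1\<close> or \<open>2\<close>.\<close>

lemma strict_decr_nth_less: "strict_decr xs \<Longrightarrow> i < j \<Longrightarrow> j < length xs \<Longrightarrow> xs ! j < xs ! i"
  unfolding strict_decr_def by (rule sorted_wrt_nth_less)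

lemma strict_decr_nth_le: "strict_decr xs \<Longrightarrow> i \<le> j \<Longrightarrow> j < length xs \<Longrightarrow> xs ! j \<le> xs ! i"
  using strict_decr_nth_less[of xs i j] by (cases "i = j") auto

lemma strict_decr_distinct: "strict_decr xs \<Longrightarrow> distinct xs"
  unfolding strict_decr_def by (metis distinct_rev sorted_wrt_rev strict_sorted_iff)

lemma mono_predD: "mono P \<Longrightarrow> P v \<Longrightarrow> v \<le> w \<Longrightarrow> P w"
  by (metis le_boolD monoD)

lemma mono_greater: "mono (\<lambda>v. (x::nat) < v)" and mono_atLeast: "mono (\<lambda>v. (x::nat) \<le> v)"
  by (auto intro: monoI)

lemma strict_decr_nth_iff_less_takeWhile:
  assumes "strict_decr xs" "mono P" "k < length xs"
  shows "P (xs ! k) \<longleftrightarrow> k < length (takeWhile P xs)"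
proof
  assume "k < length (takeWhile P xs)"
  then show "P (xs ! k)" by (metis nth_mem set_takeWhileD takeWhile_nth)
next
  assume "P (xs ! k)"
  show "k < length (takeWhile P xs)"
  proof (rule ccontr)
    let ?t = "length (takeWhile P xs)"
    assume "\<not> k < ?t"
    then have "xs ! k \<le> xs ! ?t" and "\<not> P (xs ! ?t)"
      using assms strict_decr_nth_le nth_length_takeWhile by force+
    with \<open>P (xs ! k)\<close> show False using assms(2) mono_predD by blast
  qed
qed

lemma card_filter_strict_decr:
  assumes "strict_decr xs" "mono P"
  shows "card {v\<in>set xs. P v} = length (takeWhile P xs)"
proof -
  have "{v\<in>set xs. P v} = set (takeWhile P xs)"
  proof (intro equalityI subsetI)
    fix v assume "v \<in> {v\<in>set xs. P v}"
    then obtain k where "k < length xs" "v = xs ! k" "P (xs ! k)" by (auto simp: in_set_conv_nth)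
    then show "v \<in> set (takeWhile P xs)"
      using strict_decr_nth_iff_less_takeWhile[OF assms] by (metis nth_mem takeWhile_nth)
  qed (auto dest: set_takeWhileD)
  moreover have "distinct (takeWhile P xs)"
    using strict_decr_distinct[OF assms(1)] by (rule distinct_takeWhile)
  ultimately show ?thesis by (simp add: distinct_card)
qed

lemma card_filter_strict_decr_eq_iff:
  assumes "strict_decr xs" "mono P"
  shows "card {v\<in>set xs. P v} = n \<longleftrightarrow>
    (n = 0 \<or> n - 1 < length xs \<and> P (xs ! (n - 1))) \<and> (n < length xs \<longrightarrow> \<not> P (xs ! n))"
proof -
  let ?t = "length (takeWhile P xs)"
  have le: "?t \<le> length xs" by (rule length_takeWhile_le)
  have iff: "k < length xs \<Longrightarrow> P (xs ! k) \<longleftrightarrow> k < ?t" for k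
    using strict_decr_nth_iff_less_takeWhile[OF assms] by blast
  have "?t = n \<longleftrightarrow>
    (n = 0 \<or> n - 1 < length xs \<and> P (xs ! (n - 1))) \<and> (n < length xs \<longrightarrow> \<not> P (xs ! n))"
  proof (cases n)
    case 0
    have "?t = 0 \<longleftrightarrow> (0 < length xs \<longrightarrow> \<not> P (xs ! 0))"
      using le iff[of 0] by linarith
    then show ?thesis unfolding 0 by (simp only: simp_thms)
  next
    case (Suc k)
    then show ?thesis using le iff[of k] iff[of "Suc k"] by auto
  qed
  then show ?thesis unfolding card_filter_strict_decr[OF assms] .
qed

lemma card_greater_strict_decr_nth:
  assumes "strict_decr xs" "i < length xs"
  shows "card {v\<in>set xs. xs ! i < v} = i"
  unfolding card_filter_strict_decr_eq_iff[OF assms(1) mono_greater]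
  using assms strict_decr_nth_less[OF assms(1), of "i - 1" i] by auto

lemma card_atLeast_strict_decr_nth:
  assumes "strict_decr xs" "i < length xs"
  shows "card {v\<in>set xs. xs ! i \<le> v} = Suc i"
  unfolding card_filter_strict_decr_eq_iff[OF assms(1) mono_atLeast]
  using assms strict_decr_nth_less[OF assms(1), of i "Suc i"] by auto

lemma ent_bounds_iff_card:
  fixes x :: nat
  assumes "strict_decr a"
  shows "ent a i > ereal (real x) \<and> ereal (real x) \<ge> ent a (Suc i) \<longleftrightarrow> card {v\<in>set a. x < v} = Suc i"
    and "ent a i \<ge> ereal (real x) \<and> ereal (real x) > ent a (Suc i) \<longleftrightarrow> card {v\<in>set a. x \<le> v} = Suc i"
    and "ent_prev a i > ereal (real x) \<and> ereal (real x) \<ge> ent a i \<longleftrightarrow> card {v\<in>set a. x < v} = i"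
    and "ent_prev a i \<ge> ereal (real x) \<and> ereal (real x) > ent a i \<longleftrightarrow> card {v\<in>set a. x \<le> v} = i"
  unfolding card_filter_strict_decr_eq_iff[OF assms mono_greater]
    card_filter_strict_decr_eq_iff[OF assms mono_atLeast]
  by (auto simp: ent_def ent_prev_def split: nat.split)

lemma all_nth_strict_decr_iff:
  assumes "strict_decr d"
  shows "(\<forall>i<length d. Q i (d ! i) (Suc i)) \<longleftrightarrow>
    (\<forall>x\<in>set d. Q (card {v\<in>set d. x < v}) x (card {v\<in>set d. x \<le> v}))"
proof -
  have "Q (card {v\<in>set d. d ! i < v}) (d ! i) (card {v\<in>set d. d ! i \<le> v}) = Q i (d ! i) (Suc i)"
    if "i < length d" for i
    using card_greater_strict_decr_nth[OF assms that] card_atLeast_strict_decr_nth[OF assms that] by simp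
  then show ?thesis unfolding all_set_conv_all_nth[of d] by auto
qed

lemma decr_list_props:
  assumes "finite S"
  shows "set (decr_list S) = S" "strict_decr (decr_list S)" "length (decr_list S) = card S"
  using assms by (auto simp: decr_list_def strict_decr_def sorted_wrt_rev
      intro: sorted_wrt_mono_rel[OF _ strict_sorted_list_of_set])

lemma lam_sets:
  "set (fst (lam Y M)) = (set (fst Y) - M) \<union> (set (snd Y) \<inter> M)"
  "set (snd (lam Y M)) = (set (snd Y) - M) \<union> (set (fst Y) \<inter> M)"
  "strict_decr (fst (lam Y M))" "strict_decr (snd (lam Y M))"
  by (simp_all add: lam_def decr_list_props)

lemma lam_in_Sbar: "M \<subseteq> sym_I Y \<Longrightarrow> lam Y M \<in> Sbar Y"
  unfolding Sbar_def by blast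

lemma Sbar_strict_decr: "L \<in> Sbar Y \<Longrightarrow> strict_decr (fst L) \<and> strict_decr (snd L)"
  unfolding Sbar_def using lam_sets(3,4) by blast

lemma Sbar_rows_union: "L \<in> Sbar Y \<Longrightarrow> set (fst L) \<union> set (snd L) = set (fst Y) \<union> set (snd Y)"
  unfolding Sbar_def by (auto simp: lam_sets)

lemma Sbar_sym_I_not_both: "L \<in> Sbar Y \<Longrightarrow> v \<in> sym_I Y \<Longrightarrow> v \<notin> set (fst L) \<inter> set (snd L)"
  unfolding Sbar_def sym_I_def by (auto simp: lam_sets)

lemma Sbar_card_rows:
  assumes "L \<in> Sbar Y"
  shows "card (set (fst L)) + card (set (snd L)) = card (set (fst Y)) + card (set (snd Y))"
proof -
  obtain M where M: "M \<subseteq> sym_I Y" "L = lam Y M" using assms unfolding Sbar_def by blast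
  let ?T = "set (fst Y)" and ?B = "set (snd Y)"
  have "(?T - M) \<inter> (?B \<inter> M) = {}" "(?B - M) \<inter> (?T \<inter> M) = {}"
    using M(1) unfolding sym_I_def by blast+
  then show ?thesis
    unfolding M(2) lam_sets
    using card_Int_Diff[of ?T M] card_Int_Diff[of ?B M] by (simp add: card_Un_disjoint)
qed

lemma Sbar_defect: "L \<in> Sbar Y \<Longrightarrow> defect L = int (card (set (fst L))) - int (card (set (snd L)))"
  unfolding defect_def using Sbar_strict_decr strict_decr_distinct by (simp add: distinct_card)

lemma lam_symdiff_sets:
  assumes "M \<subseteq> sym_I Y" "P \<subseteq> sym_I Y"
  shows "set (fst (lam Y ((M \<union> P) - (M \<inter> P)))) = (set (fst (lam Y M)) - P) \<union> (set (snd (lam Y M)) \<inter> P)"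
    and "set (snd (lam Y ((M \<union> P) - (M \<inter> P)))) = (set (snd (lam Y M)) - P) \<union> (set (fst (lam Y M)) \<inter> P)"
  using assms unfolding lam_sets sym_I_def by blast+

section \<open>The relation \<open>B\<^sup>+\<close> as counting conditions\<close>

text \<open>The interlacing conditions defining \<open>B\<^sup>+\<close>, rephrased through the row sets: the
  \<open>i\<close>-th entry of the bottom row of \<open>\<Lambda>'\<close> lies \<open>R\<close>-below exactly \<open>i\<close> top entries of \<open>\<Lambda>\<close>,
  the \<open>i\<close>-th entry of its top row \<open>R\<close>-below exactly \<open>i - 1\<close> bottom entries of \<open>\<Lambda>\<close>.\<close>
definition bplus_counts :: "(nat \<Rightarrow> nat \<Rightarrow> bool) \<Rightarrow> nat set \<Rightarrow> nat set \<Rightarrow> nat set \<Rightarrow> nat set \<Rightarrow> bool"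
  where "bplus_counts R A B C D \<longleftrightarrow>
    (\<forall>d\<in>D. card {v\<in>A. R d v} = card {v\<in>D. d \<le> v}) \<and>
    (\<forall>c\<in>C. card {v\<in>B. R c v} = card {v\<in>C. c < v})"

lemma bplus_countsD:
  assumes "bplus_counts R A B C D"
  shows "d \<in> D \<Longrightarrow> card {v\<in>A. R d v} = card {v\<in>D. d \<le> v}"
    and "c \<in> C \<Longrightarrow> card {v\<in>B. R c v} = card {v\<in>C. c < v}"
  using assms unfolding bplus_counts_def by blast+

lemma bplus_conditions_iff_counts:
  assumes "strict_decr a" "strict_decr b" "strict_decr c" "strict_decr d"
  shows "(\<forall>i<length d. ent a i > ent d i \<and> ent d i \<ge> ent a (i + 1)) \<and>
      (\<forall>i<length c. ent_prev b i > ent c i \<and> ent c i \<ge> ent b i)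
      \<longleftrightarrow> bplus_counts (<) (set a) (set b) (set c) (set d)"
    and "(\<forall>i<length d. ent a i \<ge> ent d i \<and> ent d i > ent a (i + 1)) \<and>
      (\<forall>i<length c. ent_prev b i \<ge> ent c i \<and> ent c i > ent b i)
      \<longleftrightarrow> bplus_counts (\<le>) (set a) (set b) (set c) (set d)"
proof -
  have ent_nth: "i < length xs \<Longrightarrow> ent xs i = ereal (real (xs ! i))" for xs i
    by (simp add: ent_def)
  show "(\<forall>i<length d. ent a i > ent d i \<and> ent d i \<ge> ent a (i + 1)) \<and>
      (\<forall>i<length c. ent_prev b i > ent c i \<and> ent c i \<ge> ent b i)
      \<longleftrightarrow> bplus_counts (<) (set a) (set b) (set c) (set d)"
    using all_nth_strict_decr_iff[OF assms(4), of "\<lambda>_ x n. card {v\<in>set a. x < v} = n"]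
      all_nth_strict_decr_iff[OF assms(3), of "\<lambda>i x _. card {v\<in>set b. x < v} = i"]
      ent_nth[of _ c] ent_nth[of _ d]
    by (simp add: bplus_counts_def ent_bounds_iff_card[OF assms(1)] ent_bounds_iff_card[OF assms(2)])
  show "(\<forall>i<length d. ent a i \<ge> ent d i \<and> ent d i > ent a (i + 1)) \<and>
      (\<forall>i<length c. ent_prev b i \<ge> ent c i \<and> ent c i > ent b i)
      \<longleftrightarrow> bplus_counts (\<le>) (set a) (set b) (set c) (set d)"
    using all_nth_strict_decr_iff[OF assms(4), of "\<lambda>_ x n. card {v\<in>set a. x \<le> v} = n"]
      all_nth_strict_decr_iff[OF assms(3), of "\<lambda>i x _. card {v\<in>set b. x \<le> v} = i"]
      ent_nth[of _ c] ent_nth[of _ d]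
    by (simp add: bplus_counts_def ent_bounds_iff_card[OF assms(1)] ent_bounds_iff_card[OF assms(2)])
qed

definition bplus_ord :: "symbol \<Rightarrow> symbol \<Rightarrow> nat \<Rightarrow> nat \<Rightarrow> bool" where
  "bplus_ord Z Z' = (if length (fst Z') = length (snd Z) then (<) else (\<le>))"

lemma Bplus_iff_counts:
  "Bplus Z Z' L L' \<longleftrightarrow> L \<in> Sbar Z \<and> L' \<in> Sbar Z' \<and> defect L' = 1 - defect L \<and>
     bplus_counts (bplus_ord Z Z') (set (fst L)) (set (snd L)) (set (fst L')) (set (snd L'))"
proof (cases "L \<in> Sbar Z \<and> L' \<in> Sbar Z'")
  case True
  then have "strict_decr (fst L)" "strict_decr (snd L)" "strict_decr (fst L')" "strict_decr (snd L')"
    using Sbar_strict_decr by blast+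
  note conv = bplus_conditions_iff_counts[OF this, symmetric]
  show ?thesis
    unfolding Bplus_def Let_def bplus_ord_def
    by (cases "length (fst Z') = length (snd Z)") (simp_all only: conv if_True if_False True simp_thms)
qed (auto simp: Bplus_def)

definition interlaced_rows :: "nat list \<Rightarrow> nat list \<Rightarrow> bool" where
  "interlaced_rows t b \<longleftrightarrow> strict_decr t \<and> strict_decr b \<and>
     length b \<le> length t \<and> length t \<le> Suc (length b) \<and>
     (\<forall>i<length b. b ! i \<le> t ! i) \<and> (\<forall>i. Suc i < length t \<longrightarrow> t ! Suc i \<le> b ! i)"

lemma special_def1_interlaced_rows: "special_def1 Z \<Longrightarrow> interlaced_rows (fst Z) (snd Z)"
  unfolding special_def1_def interlaced_rows_def is_symbol_def by auto

lemma special_def0_interlaced_rows: "special_def0 Z \<Longrightarrow> interlaced_rows (fst Z) (snd Z)"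
  unfolding special_def0_def interlaced_rows_def is_symbol_def by auto

text \<open>Set-level form of \<open>t\<^sub>1 \<ge> b\<^sub>1 \<ge> t\<^sub>2 \<ge> b\<^sub>2 \<ge> \<dots>\<close>.\<close>
definition interlacing :: "nat set \<Rightarrow> nat set \<Rightarrow> bool" where
  "interlacing T B \<longleftrightarrow> (\<forall>P. mono P \<longrightarrow>
     card {v\<in>B. P v} \<le> card {v\<in>T. P v} \<and> card {v\<in>T. P v} \<le> Suc (card {v\<in>B. P v}))"

lemma interlacingD:
  assumes "interlacing T B" "mono P"
  shows "card {v\<in>B. P v} \<le> card {v\<in>T. P v}" "card {v\<in>T. P v} \<le> Suc (card {v\<in>B. P v})"
  using assms unfolding interlacing_def by blast+

lemma card_filter_nth:
  assumes "distinct xs"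
  shows "card {v\<in>set xs. P v} = card {k. k < length xs \<and> P (xs ! k)}"
proof -
  have "{v\<in>set xs. P v} = (!) xs ` {k. k < length xs \<and> P (xs ! k)}"
    by (auto simp: in_set_conv_nth)
  moreover have "inj_on ((!) xs) {k. k < length xs \<and> P (xs ! k)}"
    using assms by (auto simp: inj_on_def nth_eq_iff_index_eq)
  ultimately show ?thesis by (simp add: card_image)
qed

lemma interlaced_rows_interlacing:
  assumes "interlaced_rows t b"
  shows "interlacing (set t) (set b)"
  unfolding interlacing_def
proof (intro allI impI conjI)
  fix P :: "nat \<Rightarrow> bool" assume P: "mono P"
  have dist: "distinct t" "distinct b"
    using assms strict_decr_distinct by (auto simp: interlaced_rows_def)
  let ?It = "{k. k < length t \<and> P (t ! k)}" and ?Ib = "{k. k < length b \<and> P (b ! k)}"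
  have "?Ib \<subseteq> ?It"
    using assms mono_predD[OF P] by (auto simp: interlaced_rows_def)
  then show "card {v\<in>set b. P v} \<le> card {v\<in>set t. P v}"
    unfolding card_filter_nth[OF dist(1)] card_filter_nth[OF dist(2)] by (intro card_mono) auto
  have "?It \<subseteq> insert 0 (Suc ` ?Ib)"
  proof
    fix k assume "k \<in> ?It"
    with assms mono_predD[OF P] show "k \<in> insert 0 (Suc ` ?Ib)"
      by (cases k) (auto simp: interlaced_rows_def)
  qed
  then have "card ?It \<le> Suc (card ?Ib)"
  proof -
    have "card ?It \<le> card (insert 0 (Suc ` ?Ib))" by (rule card_mono) (simp_all add: \<open>?It \<subseteq> _\<close>)
    also have "\<dots> \<le> Suc (card ?Ib)" by (simp add: card_insert_le_m1 card_image)
    finally show ?thesis .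
  qed
  then show "card {v\<in>set t. P v} \<le> Suc (card {v\<in>set b. P v})"
    unfolding card_filter_nth[OF dist(1)] card_filter_nth[OF dist(2)] .
qed

lemma card_atLeast_filter:
  fixes x :: "'a::linorder"
  assumes "finite S"
  shows "card {v\<in>S. x \<le> v} = (if x \<in> S then Suc (card {v\<in>S. x < v}) else card {v\<in>S. x < v})"
proof -
  have "{v\<in>S. x \<le> v} = (if x \<in> S then insert x {v\<in>S. x < v} else {v\<in>S. x < v})"
    by (auto simp: order.strict_iff_order)
  then show ?thesis using assms by simp
qed

lemma interlacing_card_greater:
  assumes "interlacing T B" "finite T" "finite B"
  shows "x \<in> T - B \<Longrightarrow> card {v\<in>T. x < v} = card {v\<in>B. x < v}"
    and "x \<in> B - T \<Longrightarrow> card {v\<in>T. x < v} = Suc (card {v\<in>B. x < v})"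
  using interlacingD[OF assms(1) mono_greater, of x] interlacingD[OF assms(1) mono_atLeast, of x]
  by (simp_all add: card_atLeast_filter[OF assms(2)] card_atLeast_filter[OF assms(3)])

lemma interlaced_rows_adjacent:
  assumes "interlaced_rows t b" "k < length t" "l < length b" "l = k \<or> Suc l = k"
    and "v \<in> set t \<union> set b"
  shows "v \<le> min (t ! k) (b ! l) \<or> max (t ! k) (b ! l) \<le> v"
proof -
  have st: "strict_decr t" and sb: "strict_decr b" and lens: "length b \<le> length t" "length t \<le> Suc (length b)"
    and bt: "\<And>i. i < length b \<Longrightarrow> b ! i \<le> t ! i" and tb: "\<And>i. Suc i < length t \<Longrightarrow> t ! Suc i \<le> b ! i"
    using assms(1) by (auto simp: interlaced_rows_def)
  have b_le_t: "b ! j \<le> t ! i" if "i \<le> j" "j < length b" for i j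
    using bt[OF that(2)] strict_decr_nth_le[OF st that(1)] that lens by fastforce
  have t_le_b: "t ! j \<le> b ! i" if "i < j" "j < length t" for i j
    using tb[of i] strict_decr_nth_le[OF st, of "Suc i" j] that by fastforce
  from assms(5) consider (top) i where "i < length t" "v = t ! i" | (bot) i where "i < length b" "v = b ! i"
    by (auto simp: in_set_conv_nth)
  then show ?thesis
  proof cases
    case (top i)
    consider "i = k" | "i < k" | "k < i" by linarith
    then show ?thesis
    proof cases
      case 2
      then show ?thesis using strict_decr_nth_le[OF st, of i k] b_le_t[of i l] top assms(2-4) by auto
    next
      case 3
      then show ?thesis using strict_decr_nth_le[OF st, of k i] t_le_b[of l i] top assms(4) by auto
    qed (use top in auto)
  next
    case (bot i)
    consider "i = l" | "i < l" | "l < i" by linarith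
    then show ?thesis
    proof cases
      case 2
      then show ?thesis using strict_decr_nth_le[OF sb, of i l] t_le_b[of i k] bot assms(2-4) by auto
    next
      case 3
      then show ?thesis using strict_decr_nth_le[OF sb, of l i] b_le_t[of k i] bot assms(4) by auto
    qed (use bot in auto)
  qed
qed

lemma consec_pair_adjacent:
  assumes "interlaced_rows (fst Y) (snd Y)" "consec_pair Y P"
  obtains x y where "y < x" "P = {x, y}" "P \<subseteq> sym_I Y"
    "x \<in> set (fst Y) - set (snd Y) \<and> y \<in> set (snd Y) - set (fst Y) \<or>
     x \<in> set (snd Y) - set (fst Y) \<and> y \<in> set (fst Y) - set (snd Y)"
    "\<forall>v\<in>set (fst Y) \<union> set (snd Y). v \<le> y \<or> x \<le> v"
proof -
  obtain k l where kl: "k < length (fst Y)" "l < length (snd Y)" "l = k \<or> Suc l = k"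
    and P: "P = {fst Y ! k, snd Y ! l}" "P \<subseteq> sym_I Y" "card P = 2"
    using assms(2) unfolding consec_pair_def by auto
  let ?p = "fst Y ! k" and ?q = "snd Y ! l"
  have "?p \<noteq> ?q" using P by auto
  moreover have mem: "?p \<in> set (fst Y) - set (snd Y)" "?q \<in> set (snd Y) - set (fst Y)"
    using kl P unfolding sym_I_def by auto
  moreover have adj: "\<forall>v\<in>set (fst Y) \<union> set (snd Y). v \<le> min ?p ?q \<or> max ?p ?q \<le> v"
    using interlaced_rows_adjacent[OF assms(1) kl] by blast
  ultimately consider "?q < ?p" | "?p < ?q" by linarith
  then show ?thesis
  proof cases
    case 1
    show ?thesis by (rule that[of ?q ?p]) (use 1 P mem adj in auto)
  next
    case 2
    show ?thesis by (rule that[of ?p ?q]) (use 2 P mem adj in \<open>auto simp: insert_commute\<close>)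
  qed
qed

lemma exists_card_greater_eq:
  fixes S :: "nat set"
  assumes "finite S" "k < card S"
  obtains s where "s \<in> S" "card {v\<in>S. s < v} = k"
proof -
  let ?xs = "decr_list S"
  have xs: "set ?xs = S" "strict_decr ?xs" "k < length ?xs"
    using decr_list_props[OF assms(1)] assms(2) by auto
  show ?thesis
    using that[of "?xs ! k"] card_greater_strict_decr_nth[OF xs(2,3)] xs(1,3) nth_mem by metis
qed

lemma le_if_card_greater_le:
  fixes s z :: "'a::linorder"
  assumes "finite S" "s \<in> S" "card {v\<in>S. z < v} \<le> card {v\<in>S. s < v}"
  shows "s \<le> z"
proof (rule ccontr)
  assume "\<not> s \<le> z"
  then have "insert s {v\<in>S. s < v} \<subseteq> {v\<in>S. z < v}" using assms(2) by auto
  then have "card (insert s {v\<in>S. s < v}) \<le> card {v\<in>S. z < v}" using assms(1) by (intro card_mono) auto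
  then show False using assms by simp
qed

lemma le_if_card_greater_less:
  fixes s z :: "'a::linorder"
  assumes "finite S" "card {v\<in>S. s < v} < card {v\<in>S. z \<le> v}"
  shows "z \<le> s"
proof (rule ccontr)
  assume "\<not> z \<le> s"
  then have "card {v\<in>S. z \<le> v} \<le> card {v\<in>S. s < v}" using assms(1) by (intro card_mono) auto
  then show False using assms(2) by simp
qed

lemma Suc_Suc_card_greater_le_card:
  fixes x y :: "'a::linorder"
  assumes "finite S" "x \<in> S" "y \<in> S" "y < x"
  shows "Suc (Suc (card {v\<in>S. x < v})) \<le> card S"
proof -
  have "card (insert x (insert y {v\<in>S. x < v})) \<le> card S" using assms by (intro card_mono) auto
  then show ?thesis using assms by simp
qed

lemma card_filter_ne_Suc_card_greater:
  fixes x y :: nat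
  assumes "finite S" "mono P" "x \<in> S" "y \<in> S" "y < x" "P x \<longleftrightarrow> P y"
  shows "card {v\<in>S. P v} \<noteq> Suc (card {v\<in>S. x < v})"
proof (cases "P y")
  case True
  then have "insert x (insert y {v\<in>S. x < v}) \<subseteq> {v\<in>S. P v}"
    using assms mono_predD[OF assms(2), of y] by auto
  then have "card (insert x (insert y {v\<in>S. x < v})) \<le> card {v\<in>S. P v}"
    using assms(1) by (intro card_mono) auto
  then show ?thesis using assms by auto
next
  case False
  then have "{v\<in>S. P v} \<subseteq> {v\<in>S. x < v}"
    using assms mono_predD[OF assms(2), of _ x] by (auto simp: not_less[symmetric])
  then have "card {v\<in>S. P v} \<le> card {v\<in>S. x < v}" using assms(1) by (intro card_mono) auto
  then show ?thesis by simp
qed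

lemma transpose_adjacent_order_iff:
  fixes x y a b :: nat
  assumes "y < x" "a \<le> y \<or> x \<le> a" "b \<le> y \<or> x \<le> b" "a \<in> {x, y} \<and> b \<in> {x, y} \<longrightarrow> a = b"
  shows "transpose x y a < transpose x y b \<longleftrightarrow> a < b"
    and "transpose x y a \<le> transpose x y b \<longleftrightarrow> a \<le> b"
  using assms by (auto simp: transpose_def)

lemma card_filter_transpose_image:
  "card {v \<in> transpose x y ` S. Q v} = card {u\<in>S. Q (transpose x y u)}"
proof -
  have "{v \<in> transpose x y ` S. Q v} = transpose x y ` {u\<in>S. Q (transpose x y u)}" by auto
  then show ?thesis by (simp add: card_image)
qed

lemma toggle_eq_transpose_image:
  assumes "x \<in> C - D \<and> y \<in> D - C \<or> x \<in> D - C \<and> y \<in> C - D"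
  shows "(C - {x, y}) \<union> (D \<inter> {x, y}) = transpose x y ` C"
  using assms by (auto simp: in_transpose_image_iff transpose_def)

section \<open>Threshold relations\<close>

locale threshold_rel =
  fixes R :: "nat \<Rightarrow> nat \<Rightarrow> bool"
  assumes R_mono: "R t v \<Longrightarrow> v \<le> w \<Longrightarrow> R t w"
    and R_antimono: "R t v \<Longrightarrow> s \<le> t \<Longrightarrow> R s v"
begin

lemma mono_R: "mono (R t)"
  by (auto intro!: monoI le_boolI elim: R_mono)

lemma card_R_antimono: "finite S \<Longrightarrow> s \<le> t \<Longrightarrow> card {v\<in>S. R t v} \<le> card {v\<in>S. R s v}"
  by (intro card_mono) (auto elim: R_antimono)

lemma bplus_counts_interlacing_bottom:
  assumes "interlacing C D" "finite B" "finite C" "finite D"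
    and counts: "bplus_counts R A B C D" and "card B \<le> card C" and "z \<in> D"
  shows "card {v\<in>B. R z v} \<le> card {v\<in>A. R z v} \<and> card {v\<in>A. R z v} \<le> Suc (card {v\<in>B. R z v})"
proof -
  let ?k = "card {v\<in>D. z < v}"
  have f: "card {v\<in>A. R z v} = Suc ?k"
    using bplus_countsD(1)[OF counts \<open>z \<in> D\<close>] card_atLeast_filter[OF \<open>finite D\<close>] \<open>z \<in> D\<close> by simp
  have "card {v\<in>D. z \<le> v} = Suc ?k"
    using card_atLeast_filter[OF \<open>finite D\<close>, of z] \<open>z \<in> D\<close> by simp
  then have C_ge: "Suc ?k \<le> card {v\<in>C. z \<le> v}"
    using interlacingD(1)[OF assms(1) mono_atLeast, of z] by simp
  have C_gt: "card {v\<in>C. z < v} \<le> Suc ?k"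
    using interlacingD(2)[OF assms(1) mono_greater, of z] .
  have "?k \<le> card {v\<in>B. R z v}"
  proof -
    have "card {v\<in>C. z \<le> v} \<le> card C" using \<open>finite C\<close> by (intro card_mono) auto
    with C_ge have "?k < card C" by simp
    then obtain c where c: "c \<in> C" "card {v\<in>C. c < v} = ?k"
      by (rule exists_card_greater_eq[OF \<open>finite C\<close>])
    have "z \<le> c" by (rule le_if_card_greater_less[OF \<open>finite C\<close>]) (use c C_ge in simp)
    then have "card {v\<in>B. R c v} \<le> card {v\<in>B. R z v}" using card_R_antimono[OF \<open>finite B\<close>] by blast
    with c show ?thesis using bplus_countsD(2)[OF counts] by simp
  qed
  moreover have "card {v\<in>B. R z v} \<le> Suc ?k"
  proof (cases "Suc ?k < card C")
    case True
    then obtain c where c: "c \<in> C" "card {v\<in>C. c < v} = Suc ?k"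
      by (rule exists_card_greater_eq[OF \<open>finite C\<close>])
    have "c \<le> z" by (rule le_if_card_greater_le[OF \<open>finite C\<close> c(1)]) (use c C_gt in simp)
    then have "card {v\<in>B. R z v} \<le> card {v\<in>B. R c v}" using card_R_antimono[OF \<open>finite B\<close>] by blast
    with c show ?thesis using bplus_countsD(2)[OF counts] by simp
  next
    case False
    have "card {v\<in>B. R z v} \<le> card B" using \<open>finite B\<close> by (intro card_mono) auto
    with False \<open>card B \<le> card C\<close> show ?thesis by linarith
  qed
  ultimately show ?thesis using f by linarith
qed

lemma bplus_counts_interlacing_top:
  assumes "interlacing C D" "finite A" "finite C" "finite D"
    and counts: "bplus_counts R A B C D" and "card A \<le> Suc (card D)" and "z \<in> C"
  shows "card {v\<in>B. R z v} \<le> card {v\<in>A. R z v} \<and> card {v\<in>A. R z v} \<le> Suc (card {v\<in>B. R z v})"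
proof -
  let ?k = "card {v\<in>C. z < v}"
  have g: "card {v\<in>B. R z v} = ?k"
    by (rule bplus_countsD(2)[OF counts \<open>z \<in> C\<close>])
  have "card {v\<in>C. z \<le> v} = Suc ?k"
    using card_atLeast_filter[OF \<open>finite C\<close>, of z] \<open>z \<in> C\<close> by simp
  then have D_ge: "?k \<le> card {v\<in>D. z \<le> v}"
    using interlacingD(2)[OF assms(1) mono_atLeast, of z] by simp
  have D_gt: "card {v\<in>D. z < v} \<le> ?k"
    using interlacingD(1)[OF assms(1) mono_greater, of z] .
  have "?k \<le> card {v\<in>A. R z v}"
  proof (cases "?k = 0")
    case False
    have "card {v\<in>D. z \<le> v} \<le> card D" using \<open>finite D\<close> by (intro card_mono) auto
    with D_ge False have "?k - 1 < card D" by simp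
    then obtain d where d: "d \<in> D" "card {v\<in>D. d < v} = ?k - 1"
      by (rule exists_card_greater_eq[OF \<open>finite D\<close>])
    have "z \<le> d" by (rule le_if_card_greater_less[OF \<open>finite D\<close>]) (use d D_ge False in simp)
    then have "card {v\<in>A. R d v} \<le> card {v\<in>A. R z v}" using card_R_antimono[OF \<open>finite A\<close>] by blast
    with d False show ?thesis
      using bplus_countsD(1)[OF counts] card_atLeast_filter[OF \<open>finite D\<close>] by simp
  qed simp
  moreover have "card {v\<in>A. R z v} \<le> Suc ?k"
  proof (cases "?k < card D")
    case True
    then obtain d where d: "d \<in> D" "card {v\<in>D. d < v} = ?k"
      by (rule exists_card_greater_eq[OF \<open>finite D\<close>])
    have "d \<le> z" by (rule le_if_card_greater_le[OF \<open>finite D\<close> d(1)]) (use d D_gt in simp)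
    then have "card {v\<in>A. R z v} \<le> card {v\<in>A. R d v}" using card_R_antimono[OF \<open>finite A\<close>] by blast
    with d show ?thesis using bplus_countsD(1)[OF counts] card_atLeast_filter[OF \<open>finite D\<close>] by simp
  next
    case False
    have "card {v\<in>A. R z v} \<le> card A" using \<open>finite A\<close> by (intro card_mono) auto
    with False \<open>card A \<le> Suc (card D)\<close> show ?thesis by linarith
  qed
  ultimately show ?thesis using g by linarith
qed

lemma bplus_counts_interlacing:
  assumes "interlacing C D" "finite A" "finite B" "finite C" "finite D"
    and "bplus_counts R A B C D" "card B \<le> card C" "card A \<le> Suc (card D)" and "z \<in> C \<union> D"
  shows "card {v\<in>B. R z v} \<le> card {v\<in>A. R z v} \<and> card {v\<in>A. R z v} \<le> Suc (card {v\<in>B. R z v})"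
  using assms bplus_counts_interlacing_bottom bplus_counts_interlacing_top by blast

lemma bplus_counts_right_separated:
  assumes "finite C" "finite D" and counts: "bplus_counts R A B C D"
    and "y < x" and indist: "\<forall>v\<in>A \<union> B. R x v \<longleftrightarrow> R y v"
  shows "\<not> (x \<in> C \<and> y \<in> C)" and "\<not> (x \<in> D \<and> y \<in> D)"
proof
  assume xy: "x \<in> C \<and> y \<in> C"
  have "card (insert x {v\<in>C. x < v}) \<le> card {v\<in>C. y < v}"
    using xy \<open>y < x\<close> \<open>finite C\<close> by (intro card_mono) auto
  moreover have "{v\<in>B. R x v} = {v\<in>B. R y v}" using indist by auto
  ultimately show False
    using bplus_countsD(2)[OF counts, of x] bplus_countsD(2)[OF counts, of y] xy \<open>finite C\<close> by simp
next
  show "\<not> (x \<in> D \<and> y \<in> D)"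
  proof
    assume xy: "x \<in> D \<and> y \<in> D"
    have "card (insert y {v\<in>D. x \<le> v}) \<le> card {v\<in>D. y \<le> v}"
      using xy \<open>y < x\<close> \<open>finite D\<close> by (intro card_mono) auto
    moreover have "{v\<in>A. R x v} = {v\<in>A. R y v}" using indist by auto
    ultimately show False
      using bplus_countsD(1)[OF counts, of x] bplus_countsD(1)[OF counts, of y] xy \<open>y < x\<close> \<open>finite D\<close>
      by simp
  qed
qed

lemma bplus_counts_left_separated:
  assumes "finite A" "finite B" "finite C" "finite D" and counts: "bplus_counts R A B C D"
    and "card B \<le> card C" "card A \<le> Suc (card D)"
    and "y < x" and indist: "\<forall>z\<in>C \<union> D. R z x \<longleftrightarrow> R z y"
  shows "\<not> (x \<in> A \<and> y \<in> A)" and "\<not> (x \<in> B \<and> y \<in> B)"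
proof
  assume xy: "x \<in> A \<and> y \<in> A"
  let ?h = "card {v\<in>A. x < v}"
  have "?h < card D"
    using Suc_Suc_card_greater_le_card[OF \<open>finite A\<close> _ _ \<open>y < x\<close>] xy \<open>card A \<le> Suc (card D)\<close> by simp
  then obtain d where d: "d \<in> D" "card {v\<in>D. d < v} = ?h"
    by (rule exists_card_greater_eq[OF \<open>finite D\<close>])
  then have "card {v\<in>A. R d v} = Suc ?h"
    using bplus_countsD(1)[OF counts] card_atLeast_filter[OF \<open>finite D\<close>] by simp
  moreover have "card {v\<in>A. R d v} \<noteq> Suc ?h"
    using card_filter_ne_Suc_card_greater[OF \<open>finite A\<close> mono_R _ _ \<open>y < x\<close>] xy d indist by blast
  ultimately show False by contradiction
next
  show "\<not> (x \<in> B \<and> y \<in> B)"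
  proof
    assume xy: "x \<in> B \<and> y \<in> B"
    let ?h = "card {v\<in>B. x < v}"
    have "Suc ?h < card C"
      using Suc_Suc_card_greater_le_card[OF \<open>finite B\<close> _ _ \<open>y < x\<close>] xy \<open>card B \<le> card C\<close> by simp
    then obtain c where c: "c \<in> C" "card {v\<in>C. c < v} = Suc ?h"
      by (rule exists_card_greater_eq[OF \<open>finite C\<close>])
    then have "card {v\<in>B. R c v} = Suc ?h"
      using bplus_countsD(2)[OF counts] by simp
    moreover have "card {v\<in>B. R c v} \<noteq> Suc ?h"
      using card_filter_ne_Suc_card_greater[OF \<open>finite B\<close> mono_R _ _ \<open>y < x\<close>] xy c indist by blast
    ultimately show False by contradiction
  qed
qed

lemma bplus_counts_transpose_right:
  assumes counts: "bplus_counts R A B C D" and "y < x"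
    and adj: "\<forall>v\<in>C \<union> D. v \<le> y \<or> x \<le> v"
    and sep: "\<not> (x \<in> C \<and> y \<in> C)" "\<not> (x \<in> D \<and> y \<in> D)"
    and indist: "\<forall>v\<in>A \<union> B. R x v \<longleftrightarrow> R y v"
  shows "bplus_counts R A B (transpose x y ` C) (transpose x y ` D)"
proof -
  let ?\<sigma> = "transpose x y"
  have R_\<sigma>: "{v\<in>S. R (?\<sigma> u) v} = {v\<in>S. R u v}" if "S \<subseteq> A \<union> B" for S u
    using that indist by (cases "u = x"; cases "u = y") auto
  have order: "(?\<sigma> u < ?\<sigma> w \<longleftrightarrow> u < w) \<and> (?\<sigma> u \<le> ?\<sigma> w \<longleftrightarrow> u \<le> w)"
    if "S = C \<or> S = D" "u \<in> S" "w \<in> S" for S u w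
  proof -
    have "u \<le> y \<or> x \<le> u" "w \<le> y \<or> x \<le> w" "u \<in> {x, y} \<and> w \<in> {x, y} \<longrightarrow> u = w"
      using that adj sep by auto
    then show ?thesis using transpose_adjacent_order_iff[OF \<open>y < x\<close>] by blast
  qed
  show ?thesis
    unfolding bplus_counts_def
  proof (intro conjI ballI)
    fix d assume "d \<in> ?\<sigma> ` D"
    then obtain u where u: "u \<in> D" "d = ?\<sigma> u" by blast
    have "card {v\<in>A. R d v} = card {v\<in>A. R u v}" using R_\<sigma>[of A] u(2) by simp
    also have "\<dots> = card {w\<in>D. u \<le> w}" by (rule bplus_countsD(1)[OF counts u(1)])
    also have "{w\<in>D. u \<le> w} = {w\<in>D. d \<le> ?\<sigma> w}" using order[of D u] u by blast
    also have "card \<dots> = card {v\<in>?\<sigma> ` D. d \<le> v}" by (rule card_filter_transpose_image[symmetric])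
    finally show "card {v\<in>A. R d v} = card {v\<in>?\<sigma> ` D. d \<le> v}" .
  next
    fix c assume "c \<in> ?\<sigma> ` C"
    then obtain u where u: "u \<in> C" "c = ?\<sigma> u" by blast
    have "card {v\<in>B. R c v} = card {v\<in>B. R u v}" using R_\<sigma>[of B] u(2) by simp
    also have "\<dots> = card {w\<in>C. u < w}" by (rule bplus_countsD(2)[OF counts u(1)])
    also have "{w\<in>C. u < w} = {w\<in>C. c < ?\<sigma> w}" using order[of C u] u by blast
    also have "card \<dots> = card {v\<in>?\<sigma> ` C. c < v}" by (rule card_filter_transpose_image[symmetric])
    finally show "card {v\<in>B. R c v} = card {v\<in>?\<sigma> ` C. c < v}" .
  qed
qed

lemma bplus_counts_transpose_left:
  assumes counts: "bplus_counts R A B C D" and indist: "\<forall>z\<in>C \<union> D. R z x \<longleftrightarrow> R z y"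
  shows "bplus_counts R (transpose x y ` A) (transpose x y ` B) C D"
proof -
  have "card {v\<in>transpose x y ` S. R z v} = card {v\<in>S. R z v}" if "z \<in> C \<union> D" for S z
  proof -
    have "R z (transpose x y u) \<longleftrightarrow> R z u" for u
      using indist that by (cases "u = x"; cases "u = y") auto
    then have "{u\<in>S. R z (transpose x y u)} = {u\<in>S. R z u}" by simp
    then show ?thesis by (simp add: card_filter_transpose_image)
  qed
  then show ?thesis using bplus_countsD[OF counts] unfolding bplus_counts_def by simp
qed

lemma bplus_counts_toggled_right_indist:
  assumes AB: "interlacing A B" and CD: "interlacing C D"
    and fin: "finite A" "finite B" "finite C" "finite D"
    and "y < x" and pair: "x \<in> C - D \<and> y \<in> D - C \<or> x \<in> D - C \<and> y \<in> C - D"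
    and adj: "\<forall>v\<in>C \<union> D. v \<le> y \<or> x \<le> v"
    and counts: "bplus_counts R A B ((C - {x, y}) \<union> (D \<inter> {x, y})) ((D - {x, y}) \<union> (C \<inter> {x, y}))"
  shows "\<forall>v\<in>A \<union> B. R x v \<longleftrightarrow> R y v"
proof -
  let ?C = "(C - {x, y}) \<union> (D \<inter> {x, y})" and ?D = "(D - {x, y}) \<union> (C \<inter> {x, y})"
  have adj': "v \<in> C \<union> D \<Longrightarrow> y < v \<longleftrightarrow> x \<le> v" for v using adj \<open>y < x\<close> by force
  have sub: "{v\<in>A. R x v} \<subseteq> {v\<in>A. R y v}" "{v\<in>B. R x v} \<subseteq> {v\<in>B. R y v}"
    using \<open>y < x\<close> by (auto elim: R_antimono)
  have AB_x: "card {v\<in>B. R x v} \<le> card {v\<in>A. R x v}" "card {v\<in>A. R x v} \<le> Suc (card {v\<in>B. R x v})"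
    and AB_y: "card {v\<in>B. R y v} \<le> card {v\<in>A. R y v}" "card {v\<in>A. R y v} \<le> Suc (card {v\<in>B. R y v})"
    using interlacingD[OF AB mono_R] by blast+
  have mono_xy: "card {v\<in>A. R x v} \<le> card {v\<in>A. R y v}" "card {v\<in>B. R x v} \<le> card {v\<in>B. R y v}"
    using sub fin by (simp_all add: card_mono)
  from pair consider (xC) "x \<in> C - D" "y \<in> D - C" | (xD) "x \<in> D - C" "y \<in> C - D" by blast
  then have "card {v\<in>A. R y v} = card {v\<in>A. R x v} \<and> card {v\<in>B. R y v} = card {v\<in>B. R x v}"
  proof cases
    case xC
    have eqs: "{v\<in>?D. x \<le> v} = insert x {v\<in>D. x < v}" "{v\<in>?C. y < v} = {v\<in>C. x < v}"
      using xC adj' \<open>y < x\<close> by (auto simp: order.order_iff_strict)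
    have "card {v\<in>A. R x v} = Suc (card {v\<in>D. x < v})" "card {v\<in>B. R y v} = card {v\<in>C. x < v}"
      using bplus_countsD(1)[OF counts, of x, unfolded eqs] bplus_countsD(2)[OF counts, of y, unfolded eqs]
        xC fin by simp_all
    moreover have "card {v\<in>C. x < v} = card {v\<in>D. x < v}"
      using interlacing_card_greater(1)[OF CD fin(3,4)] xC by blast
    ultimately show ?thesis using AB_x AB_y mono_xy by linarith
  next
    case xD
    have eqs: "{v\<in>?C. x < v} = {v\<in>C. x < v}" "{v\<in>?D. y \<le> v} = insert y {v\<in>D. x < v}"
      using xD adj' \<open>y < x\<close> by (auto simp: order.order_iff_strict)
    have "card {v\<in>B. R x v} = card {v\<in>C. x < v}" "card {v\<in>A. R y v} = Suc (card {v\<in>D. x < v})"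
      using bplus_countsD(1)[OF counts, of y, unfolded eqs] bplus_countsD(2)[OF counts, of x, unfolded eqs]
        xD fin \<open>y < x\<close> by simp_all
    moreover have "card {v\<in>C. x < v} = Suc (card {v\<in>D. x < v})"
      using interlacing_card_greater(2)[OF CD fin(3,4)] xD by blast
    ultimately show ?thesis using AB_x AB_y mono_xy by linarith
  qed
  then have "{v\<in>A. R x v} = {v\<in>A. R y v}" "{v\<in>B. R x v} = {v\<in>B. R y v}"
    using sub fin by (simp_all add: card_subset_eq)
  then show ?thesis by blast
qed

lemma bplus_counts_toggled_left_indist:
  assumes AB: "interlacing A B" and CD: "interlacing C D"
    and fin: "finite A" "finite B" "finite C" "finite D"
    and "y < x" and pair: "x \<in> A - B \<and> y \<in> B - A \<or> x \<in> B - A \<and> y \<in> A - B"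
    and adj: "\<forall>v\<in>A \<union> B. v \<le> y \<or> x \<le> v"
    and counts: "bplus_counts R ((A - {x, y}) \<union> (B \<inter> {x, y})) ((B - {x, y}) \<union> (A \<inter> {x, y})) C D"
    and card_le: "card ((B - {x, y}) \<union> (A \<inter> {x, y})) \<le> card C"
      "card ((A - {x, y}) \<union> (B \<inter> {x, y})) \<le> Suc (card D)"
  shows "\<forall>z\<in>C \<union> D. R z x \<longleftrightarrow> R z y"
proof
  let ?A = "(A - {x, y}) \<union> (B \<inter> {x, y})" and ?B = "(B - {x, y}) \<union> (A \<inter> {x, y})"
  fix z assume z: "z \<in> C \<union> D"
  show "R z x \<longleftrightarrow> R z y"
  proof (rule ccontr)
    assume "\<not> (R z x \<longleftrightarrow> R z y)"
    then have "R z x" "\<not> R z y" using R_mono[of z y x] \<open>y < x\<close> by auto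
    then have "R z v \<longleftrightarrow> x \<le> v" if "v \<in> A \<union> B" for v
      using adj that R_mono[of z v y] R_mono[of z x v] by auto
    then have "{v\<in>?A. R z v} = {v\<in>?A. x \<le> v}" "{v\<in>?B. R z v} = {v\<in>?B. x \<le> v}"
      by blast+
    moreover have "finite ?A" "finite ?B" using fin by auto
    ultimately have il: "card {v\<in>?B. x \<le> v} \<le> card {v\<in>?A. x \<le> v} \<and>
        card {v\<in>?A. x \<le> v} \<le> Suc (card {v\<in>?B. x \<le> v})"
      using bplus_counts_interlacing[OF CD _ _ fin(3,4) counts card_le z] by simp
    from pair consider (xA) "x \<in> A - B" "y \<in> B - A" | (xB) "x \<in> B - A" "y \<in> A - B" by blast
    then show False
    proof cases
      case xA
      have eqs: "{v\<in>?A. x \<le> v} = {v\<in>A. x < v}" "{v\<in>?B. x \<le> v} = insert x {v\<in>B. x < v}"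
        using xA \<open>y < x\<close> by auto
      moreover have "card {v\<in>A. x < v} = card {v\<in>B. x < v}"
        using interlacing_card_greater(1)[OF AB fin(1,2)] xA by blast
      ultimately show False using il[unfolded eqs] xA(1) fin by simp
    next
      case xB
      have eqs: "{v\<in>?A. x \<le> v} = insert x {v\<in>A. x < v}" "{v\<in>?B. x \<le> v} = {v\<in>B. x < v}"
        using xB \<open>y < x\<close> by auto
      moreover have "card {v\<in>A. x < v} = Suc (card {v\<in>B. x < v})"
        using interlacing_card_greater(2)[OF AB fin(1,2)] xB by blast
      ultimately show False using il[unfolded eqs] xB(1) fin by simp
    qed
  qed
qed

end

section \<open>Consecutive pairs of special symbols\<close>

lemma lam_toggle_pair_transpose:
  assumes M: "M \<subseteq> sym_I Y" and xy: "{x, y} \<subseteq> sym_I Y"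
    and sep: "\<not> (x \<in> set (fst (lam Y M)) \<and> y \<in> set (fst (lam Y M)))"
      "\<not> (x \<in> set (snd (lam Y M)) \<and> y \<in> set (snd (lam Y M)))"
  shows "set (fst (lam Y ((M \<union> {x, y}) - (M \<inter> {x, y})))) = transpose x y ` set (fst (lam Y M))"
    and "set (snd (lam Y ((M \<union> {x, y}) - (M \<inter> {x, y})))) = transpose x y ` set (snd (lam Y M))"
    and "defect (lam Y ((M \<union> {x, y}) - (M \<inter> {x, y}))) = defect (lam Y M)"
proof -
  have L: "lam Y M \<in> Sbar Y" using M by (rule lam_in_Sbar)
  have "x \<in> set (fst (lam Y M)) - set (snd (lam Y M)) \<and> y \<in> set (snd (lam Y M)) - set (fst (lam Y M)) \<or>
      x \<in> set (snd (lam Y M)) - set (fst (lam Y M)) \<and> y \<in> set (fst (lam Y M)) - set (snd (lam Y M))"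
    using Sbar_rows_union[OF L] Sbar_sym_I_not_both[OF L] xy sep unfolding sym_I_def by blast
  then show fst: "set (fst (lam Y ((M \<union> {x, y}) - (M \<inter> {x, y})))) = transpose x y ` set (fst (lam Y M))"
    and snd: "set (snd (lam Y ((M \<union> {x, y}) - (M \<inter> {x, y})))) = transpose x y ` set (snd (lam Y M))"
    unfolding lam_symdiff_sets[OF M xy] by (simp_all add: toggle_eq_transpose_image disj_commute)
  have toggled: "lam Y ((M \<union> {x, y}) - (M \<inter> {x, y})) \<in> Sbar Y"
    using M xy by (intro lam_in_Sbar) blast
  show "defect (lam Y ((M \<union> {x, y}) - (M \<inter> {x, y}))) = defect (lam Y M)"
    unfolding Sbar_defect[OF L] Sbar_defect[OF toggled] fst snd by (simp add: card_image)
qed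

lemma threshold_rel_bplus_ord: "threshold_rel (bplus_ord Z Z')"
  unfolding bplus_ord_def by unfold_locales auto

locale special_pair =
  fixes Z Z' :: symbol
  assumes special_Z: "special_def1 Z" and special_Z': "special_def0 Z'"
    and length_cond: "length (fst Z') = length (snd Z) \<or> length (fst Z') = length (snd Z) + 1"
begin

sublocale threshold_rel "bplus_ord Z Z'"
  by (rule threshold_rel_bplus_ord)

lemma interlacing_Z: "interlacing (set (fst Z)) (set (snd Z))"
  by (rule interlaced_rows_interlacing[OF special_def1_interlaced_rows[OF special_Z]])

lemma interlacing_Z': "interlacing (set (fst Z')) (set (snd Z'))"
  by (rule interlaced_rows_interlacing[OF special_def0_interlaced_rows[OF special_Z']])

lemma Bplus_card_bounds:
  assumes "Bplus Z Z' L L'"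
  shows "card (set (snd L)) \<le> card (set (fst L'))" "card (set (fst L)) \<le> Suc (card (set (snd L')))"
proof -
  from assms have L: "L \<in> Sbar Z" "L' \<in> Sbar Z'" and "defect L' = 1 - defect L"
    by (simp_all add: Bplus_iff_counts)
  then have "int (card (set (fst L'))) + int (card (set (fst L))) = 1 + int (card (set (snd L))) + int (card (set (snd L')))"
    unfolding Sbar_defect[OF L(1)] Sbar_defect[OF L(2)] by linarith
  moreover have "card (set (fst Z)) = Suc (length (snd Z))" "card (set (snd Z)) = length (snd Z)"
    "card (set (fst Z')) = length (fst Z')" "card (set (snd Z')) = length (fst Z')"
    using special_Z special_Z' strict_decr_distinct
    by (auto simp: special_def1_def special_def0_def is_symbol_def distinct_card)
  ultimately show "card (set (snd L)) \<le> card (set (fst L'))" "card (set (fst L)) \<le> Suc (card (set (snd L')))"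
    using Sbar_card_rows[OF L(1)] Sbar_card_rows[OF L(2)] length_cond by linarith+
qed

lemma Bplus_toggle_right:
  assumes P: "consec_pair Z' P" "Bplus Z Z' Z (lam Z' P)"
    and N: "N \<subseteq> sym_I Z'" "Bplus Z Z' L (lam Z' N)"
  shows "Bplus Z Z' L (lam Z' ((N \<union> P) - (N \<inter> P)))"
proof -
  obtain x y where "y < x" and xy: "P = {x, y}" "P \<subseteq> sym_I Z'"
    and pair: "x \<in> set (fst Z') - set (snd Z') \<and> y \<in> set (snd Z') - set (fst Z') \<or>
      x \<in> set (snd Z') - set (fst Z') \<and> y \<in> set (fst Z') - set (snd Z')"
    and adj: "\<forall>v\<in>set (fst Z') \<union> set (snd Z'). v \<le> y \<or> x \<le> v"
    by (rule consec_pair_adjacent[OF special_def0_interlaced_rows[OF special_Z'] P(1)])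
  have "bplus_counts (bplus_ord Z Z') (set (fst Z)) (set (snd Z))
      ((set (fst Z') - {x, y}) \<union> (set (snd Z') \<inter> {x, y})) ((set (snd Z') - {x, y}) \<union> (set (fst Z') \<inter> {x, y}))"
    using P(2) unfolding Bplus_iff_counts lam_sets xy(1) by blast
  then have indist: "\<forall>v\<in>set (fst Z) \<union> set (snd Z). bplus_ord Z Z' x v \<longleftrightarrow> bplus_ord Z Z' y v"
    by (intro bplus_counts_toggled_right_indist[OF interlacing_Z interlacing_Z' _ _ _ _ \<open>y < x\<close> pair adj]) auto
  let ?A = "set (fst L)" and ?B = "set (snd L)" and ?C = "set (fst (lam Z' N))" and ?D = "set (snd (lam Z' N))"
  from N(2) have L: "L \<in> Sbar Z" and def: "defect (lam Z' N) = 1 - defect L"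
    and counts: "bplus_counts (bplus_ord Z Z') ?A ?B ?C ?D"
    unfolding Bplus_iff_counts by blast+
  have AB: "?A \<union> ?B = set (fst Z) \<union> set (snd Z)" by (rule Sbar_rows_union[OF L])
  have CD: "?C \<union> ?D = set (fst Z') \<union> set (snd Z')" by (rule Sbar_rows_union[OF lam_in_Sbar[OF N(1)]])
  have sep: "\<not> (x \<in> ?C \<and> y \<in> ?C)" "\<not> (x \<in> ?D \<and> y \<in> ?D)"
    using bplus_counts_right_separated[OF _ _ counts \<open>y < x\<close>] indist unfolding AB by auto
  have "bplus_counts (bplus_ord Z Z') ?A ?B (transpose x y ` ?C) (transpose x y ` ?D)"
    using bplus_counts_transpose_right[OF counts \<open>y < x\<close> _ sep] adj indist unfolding AB CD by blast
  moreover have "(N \<union> {x, y}) - (N \<inter> {x, y}) \<subseteq> sym_I Z'" using N(1) xy by blast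
  ultimately show ?thesis
    using L def lam_toggle_pair_transpose[OF N(1) _ sep] xy
    unfolding Bplus_iff_counts xy(1) by (simp add: lam_in_Sbar)
qed

lemma Bplus_toggle_left:
  assumes P: "consec_pair Z P" "Bplus Z Z' (lam Z P) Z'"
    and M: "M \<subseteq> sym_I Z" "Bplus Z Z' (lam Z M) L'"
  shows "Bplus Z Z' (lam Z ((M \<union> P) - (M \<inter> P))) L'"
proof -
  obtain x y where "y < x" and xy: "P = {x, y}" "P \<subseteq> sym_I Z"
    and pair: "x \<in> set (fst Z) - set (snd Z) \<and> y \<in> set (snd Z) - set (fst Z) \<or>
      x \<in> set (snd Z) - set (fst Z) \<and> y \<in> set (fst Z) - set (snd Z)"
    and adj: "\<forall>v\<in>set (fst Z) \<union> set (snd Z). v \<le> y \<or> x \<le> v"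
    by (rule consec_pair_adjacent[OF special_def1_interlaced_rows[OF special_Z] P(1)])
  have "bplus_counts (bplus_ord Z Z') ((set (fst Z) - {x, y}) \<union> (set (snd Z) \<inter> {x, y}))
      ((set (snd Z) - {x, y}) \<union> (set (fst Z) \<inter> {x, y})) (set (fst Z')) (set (snd Z'))"
    using P(2) unfolding Bplus_iff_counts lam_sets xy(1) by blast
  moreover have "card ((set (snd Z) - {x, y}) \<union> (set (fst Z) \<inter> {x, y})) \<le> card (set (fst Z'))"
    "card ((set (fst Z) - {x, y}) \<union> (set (snd Z) \<inter> {x, y})) \<le> Suc (card (set (snd Z')))"
    using Bplus_card_bounds[OF P(2)] unfolding lam_sets xy(1) by blast+
  ultimately have indist: "\<forall>z\<in>set (fst Z') \<union> set (snd Z'). bplus_ord Z Z' z x \<longleftrightarrow> bplus_ord Z Z' z y"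
    by (intro bplus_counts_toggled_left_indist[OF interlacing_Z interlacing_Z' _ _ _ _ \<open>y < x\<close> pair adj]) auto
  let ?A = "set (fst (lam Z M))" and ?B = "set (snd (lam Z M))" and ?C = "set (fst L')" and ?D = "set (snd L')"
  from M(2) have L': "L' \<in> Sbar Z'" and def: "defect L' = 1 - defect (lam Z M)"
    and counts: "bplus_counts (bplus_ord Z Z') ?A ?B ?C ?D"
    unfolding Bplus_iff_counts by blast+
  have CD: "?C \<union> ?D = set (fst Z') \<union> set (snd Z')" by (rule Sbar_rows_union[OF L'])
  have sep: "\<not> (x \<in> ?A \<and> y \<in> ?A)" "\<not> (x \<in> ?B \<and> y \<in> ?B)"
    using bplus_counts_left_separated[OF _ _ _ _ counts Bplus_card_bounds[OF M(2)] \<open>y < x\<close>] indist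
    unfolding CD by auto
  have "bplus_counts (bplus_ord Z Z') (transpose x y ` ?A) (transpose x y ` ?B) ?C ?D"
    using bplus_counts_transpose_left[OF counts] indist unfolding CD by blast
  moreover have "(M \<union> {x, y}) - (M \<inter> {x, y}) \<subseteq> sym_I Z" using M(1) xy by blast
  ultimately show ?thesis
    using L' def lam_toggle_pair_transpose[OF M(1) _ sep] xy
    unfolding Bplus_iff_counts xy(1) by (simp add: lam_in_Sbar)
qed

lemma Bplus_toggle_right_iff:
  assumes "consec_pair Z' P" "Bplus Z Z' Z (lam Z' P)" "N \<subseteq> sym_I Z'"
  shows "Bplus Z Z' L (lam Z' N) \<longleftrightarrow> Bplus Z Z' L (lam Z' ((N \<union> P) - (N \<inter> P)))"
proof -
  let ?N' = "(N \<union> P) - (N \<inter> P)"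
  have "P \<subseteq> sym_I Z'" using assms(1) unfolding consec_pair_def by blast
  then have "?N' \<subseteq> sym_I Z'" "(?N' \<union> P) - (?N' \<inter> P) = N" using assms(3) by blast+
  then show ?thesis using Bplus_toggle_right[OF assms(1,2)] assms(3) by metis
qed

lemma Bplus_toggle_left_iff:
  assumes "consec_pair Z P" "Bplus Z Z' (lam Z P) Z'" "M \<subseteq> sym_I Z"
  shows "Bplus Z Z' (lam Z M) L' \<longleftrightarrow> Bplus Z Z' (lam Z ((M \<union> P) - (M \<inter> P))) L'"
proof -
  let ?M' = "(M \<union> P) - (M \<inter> P)"
  have "P \<subseteq> sym_I Z" using assms(1) unfolding consec_pair_def by blast
  then have "?M' \<subseteq> sym_I Z" "(?M' \<union> P) - (?M' \<inter> P) = M" using assms(3) by blast+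
  then show ?thesis using Bplus_toggle_left[OF assms(1,2)] assms(3) by metis
qed

end

theorem lemma0808:
  fixes Z Z' :: symbol and M N :: "nat set"
  assumes "special_def1 Z" and "special_def0 Z'"
    and "length (fst Z') = length (snd Z) \<or> length (fst Z') = length (snd Z) + 1"
    and "Dset Z Z' \<noteq> {}"
    and "M \<subseteq> sym_I Z" and "N \<subseteq> sym_I Z'"
  shows "(\<forall>P'. consec_pair Z' P' \<and> (Z, lam Z' P') \<in> Dset Z Z' \<longrightarrow>
            (Bplus Z Z' (lam Z M) (lam Z' N) \<longleftrightarrow>
             Bplus Z Z' (lam Z M) (lam Z' ((N \<union> P') - (N \<inter> P')))))
       \<and> (\<forall>P. consec_pair Z P \<and> (lam Z P, Z') \<in> Dset Z Z' \<longrightarrow>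
            (Bplus Z Z' (lam Z M) (lam Z' N) \<longleftrightarrow>
             Bplus Z Z' (lam Z ((M \<union> P) - (M \<inter> P))) (lam Z' N)))"
  \<comment> \<open>\<open>Dset Z Z' \<noteq> {}\<close> is implied by the membership hypotheses of both parts.\<close>
proof -
  interpret special_pair Z Z' using assms(1-3) by unfold_locales
  show ?thesis
    using Bplus_toggle_right_iff[OF _ _ assms(6)] Bplus_toggle_left_iff[OF _ _ assms(5)]
    by (simp add: Dset_def)
qed

end
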